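(* The target counital subalgebra of the quantum groupoid $H_\mathcal{C}$ is $$H_t(H_\mathcal{C})=\mathrm{span}_a\Big\{\sum_{k,b}\frac{\sqrt{d_k}}{\sqrt{d_a}}\,e^{ab}_{k;ab}\Big\},$$ where $a$ ranges over $Irr(\mathcal{C})$, and the inner sum is over $k,b\in Irr(\mathcal{C})$ with $(a,k,b)$ admissible. Moreover $\dim_\mathbb{C}H_t(H_\mathcal{C})=\dim_\mathbb{C}V_{\mathbf{1}}$, so $H_t(H_\mathcal{C})\cong V_{\mathbf{1}}$ as $H_\mathcal{C}$-modules. In particular the tensor unit $H_t(H_\mathcal{C})$ of $Rep(H_\mathcal{C})$ is simple.
   Context: Let $\mathcal{C}$ be a unitary fusion category that is multiplicity-free, whose simple objects are self-dual, and whose Frobenius–Schur indicators are trivial. Choose its $F$-matrices to be unitary, and normalize theta symbols as $\theta(a,b,c)=\sqrt{d_ad_bd_c}$, where $d_a$ is the quantum dimension of $a$ and $Irr(\mathcal{C})$ is the set of simple objects. The Kitaev–Kong $C^*$-quantum groupoid (weak Hopf algebra) is $$H_\mathcal{C}=\bigoplus_{a,b,c,d,i\in Irr(\mathcal{C})}Hom(b,a\otimes i)\otimes Hom(i\otimes d,c).$$ It has basis vectors $e^{ab}_{i;cd}$, pictured as an "H"-shaped graph: left vertical edge labelled $a$ on top and $b$ on the bottom, right vertical edge labelled $c$ on top and $d$ on the bottom, and horizontal rung labelled $i$. The structure maps are as follows. - Multiplication: $e^{ab}_{i;cd}\,e^{a'b'}_{i';c'd'}=\frac{\delta_{c,a'}\delta_{d,b'}\delta_{i,i'}}{\sqrt{d_i}}\,e^{ab}_{i;c'd'}$.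 - Unit: $\eta=\sum_{a,b,i}\sqrt{d_i}\,e^{ab}_{i;ab}$. - Counit: $\varepsilon(e^{ab}_{i;cd})=\delta_{a,b}\delta_{c,d}\delta_{i,\mathbf{1}}$. - Comultiplication: $$\Delta(e^{ab}_{i;cd})=\sum_{j,k,p,q}\frac{\sqrt{d_jd_k}}{\sqrt{d_i}}F^{ajk}_{b;ip}F^{dkj}_{c;iq}\;e^{ap}_{j;cq}\otimes e^{pb}_{k;qd},$$ where $j,k$ range over labels admissible with $i$. - Antipode: $S(e^{ab}_{i;cd})=\frac{\sqrt{d_bd_c}}{\sqrt{d_ad_d}}e^{dc}_{i;ba}$. - Star: $(e^{ab}_{i;cd})^*=e^{cd}_{i;ab}$. The target counital map is $\varepsilon_t(h)=\varepsilon(\eta_{(1)}h)\eta_{(2)}$ (Sweedler notation $\Delta(\eta)=\eta_{(1)}\otimes\eta_{(2)}$). The target counital subalgebra is $H_t=\varepsilon_t(H_\mathcal{C})$. It is the tensor unit of $Rep(H_\mathcal{C})$, with action $h\cdot z=\varepsilon_t(hz)$. For $i\in Irr(\mathcal{C})$, let $V_i=\mathrm{span}\{v^{ab}_i : (i,a,b)\text{ admissible}\}$, where $v^{ab}_i$ is a trivalent vertex with legs labelled $a,b,i$. Its $H_\mathcal{C}$-module structure is $e^{ab}_{j;cd}\cdot v^{pq}_i=\frac{\delta_{i,j}\delta_{c,p}\delta_{d,q}}{\sqrt{d_i}}v^{ab}_i$. The $V_i$ are the simple $H_\mathcal{C}$-modules. *)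

theory Defs
  imports "HOL-Analysis.Analysis" "HOL-Library.Function_Algebras"
begin

text \<open>Labels (simple objects of the fusion category) form a finite type 'l.
  adm a b c  means  Hom(c, a \<otimes> b) \<noteq> 0  (multiplicity-free, so it is then 1-dimensional).
  F a j k b i p  is the F-symbol  F^{ajk}_{b;ip}  of the paper: a basis change for Hom(b, a\<otimes>j\<otimes>k),
  with p the channel of a\<otimes>j and i the channel of j\<otimes>k.\<close>

definition fusion_data ::
  "'l::finite \<Rightarrow> ('l \<Rightarrow> 'l \<Rightarrow> 'l \<Rightarrow> bool) \<Rightarrow> ('l \<Rightarrow> real)
    \<Rightarrow> ('l \<Rightarrow> 'l \<Rightarrow> 'l \<Rightarrow> 'l \<Rightarrow> 'l \<Rightarrow> 'l \<Rightarrow> complex) \<Rightarrow> bool" where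
  "fusion_data one adm d F \<longleftrightarrow>
     \<comment> \<open>all simple objects self-dual: the fusion coefficients are totally symmetric\<close>
     (\<forall>a b c. adm a b c \<longrightarrow> adm b a c) \<and>
     (\<forall>a b c. adm a b c \<longrightarrow> adm a c b) \<and>
     \<comment> \<open>unit object\<close>
     (\<forall>a b. adm a one b \<longleftrightarrow> a = b) \<and>
     \<comment> \<open>associativity of the fusion rules\<close>
     (\<forall>a b c e. card {f. adm a b f \<and> adm f c e} = card {g. adm b c g \<and> adm a g e}) \<and>
     \<comment> \<open>quantum dimensions (unitary case: positive, multiplicative on fusion rules)\<close>
     d one = 1 \<and> (\<forall>a. d a > 0) \<and>
     (\<forall>a b. d a * d b = (\<Sum>c\<in>{c. adm a b c}. d c)) \<and>
     \<comment> \<open>F-symbols vanish outside admissible configurations\<close>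
     (\<forall>a j k b i p. F a j k b i p \<noteq> 0 \<longrightarrow>
         adm a j p \<and> adm p k b \<and> adm j k i \<and> adm a i b) \<and>
     \<comment> \<open>F-matrices are unitary\<close>
     (\<forall>a j k b i i'. adm j k i \<and> adm a i b \<and> adm j k i' \<and> adm a i' b \<longrightarrow>
         (\<Sum>p\<in>UNIV. F a j k b i p * cnj (F a j k b i' p)) = (if i = i' then 1 else 0)) \<and>
     (\<forall>a j k b p p'. adm a j p \<and> adm p k b \<and> adm a j p' \<and> adm p' k b \<longrightarrow>
         (\<Sum>i\<in>UNIV. F a j k b i p * cnj (F a j k b i p')) = (if p = p' then 1 else 0)) \<and>
     \<comment> \<open>normalization: F-moves involving the unit object are trivial\<close>
     (\<forall>a j k b i p. adm a j p \<and> adm p k b \<and> adm j k i \<and> adm a i b \<and>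
         (a = one \<or> j = one \<or> k = one) \<longrightarrow> F a j k b i p = 1) \<and>
     \<comment> \<open>pentagon equation\<close>
     (\<forall>a b c d' e f g k l.
         F f c d' e l g * F a b l e k f =
         (\<Sum>h\<in>UNIV. F a b c g h f * F a h d' e k g * F b c d' k l h)) \<and>
     \<comment> \<open>trivial Frobenius-Schur indicators\<close>
     (\<forall>a. complex_of_real (d a) * F a a a a one one = 1)"

text \<open>Index tuples (a,b,i,c,d) of the basis vectors e^{ab}_{i;cd} of H_C.\<close>
type_synonym 'l hidx = "'l \<times> 'l \<times> 'l \<times> 'l \<times> 'l"

definition admH :: "('l \<Rightarrow> 'l \<Rightarrow> 'l \<Rightarrow> bool) \<Rightarrow> 'l hidx \<Rightarrow> bool" where
  "admH adm t = (case t of (a, b, i, c, d) \<Rightarrow> adm a i b \<and> adm i d c)"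

text \<open>Elements of H_C: complex coefficient functions supported on admissible index tuples.\<close>
definition Hspace :: "('l \<Rightarrow> 'l \<Rightarrow> 'l \<Rightarrow> bool) \<Rightarrow> ('l hidx \<Rightarrow> complex) set" where
  "Hspace adm = {x. \<forall>t. \<not> admH adm t \<longrightarrow> x t = 0}"

definition cscale :: "complex \<Rightarrow> ('x \<Rightarrow> complex) \<Rightarrow> ('x \<Rightarrow> complex)" where
  "cscale c f = (\<lambda>x. c * f x)"

definition ebasis :: "('l \<Rightarrow> 'l \<Rightarrow> 'l \<Rightarrow> bool) \<Rightarrow> 'l hidx \<Rightarrow> ('l hidx \<Rightarrow> complex)" where
  "ebasis adm t = (\<lambda>s. if s = t \<and> admH adm t then 1 else 0)"

abbreviation sq :: "real \<Rightarrow> complex" where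
  "sq x \<equiv> complex_of_real (sqrt x)"

text \<open>Multiplication: e^{ab}_{i;cd} e^{a'b'}_{i';c'd'} = \<delta>_{c a'} \<delta>_{d b'} \<delta>_{i i'} / sqrt d_i  e^{ab}_{i;c'd'}.\<close>
definition Hmult :: "('l::finite \<Rightarrow> real) \<Rightarrow> ('l hidx \<Rightarrow> complex) \<Rightarrow> ('l hidx \<Rightarrow> complex)
     \<Rightarrow> ('l hidx \<Rightarrow> complex)" where
  "Hmult d x y = (\<lambda>(a, b, i, c', d').
      (\<Sum>(c, e)\<in>UNIV. x (a, b, i, c, e) * y (c, e, i, c', d')) / sq (d i))"

definition Hunit :: "('l \<Rightarrow> 'l \<Rightarrow> 'l \<Rightarrow> bool) \<Rightarrow> ('l \<Rightarrow> real) \<Rightarrow> ('l hidx \<Rightarrow> complex)" where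
  "Hunit adm d = (\<lambda>(a, b, i, c, e). if c = a \<and> e = b \<and> admH adm (a, b, i, c, e) then sq (d i) else 0)"

definition Hcounit :: "'l::finite \<Rightarrow> ('l hidx \<Rightarrow> complex) \<Rightarrow> complex" where
  "Hcounit one x = (\<Sum>(a, c)\<in>UNIV. x (a, a, one, c, c))"

text \<open>Comultiplication, with values in H \<otimes> H represented as coefficient functions on pairs of
  index tuples:  \<Delta>(e^{ab}_{i;cd}) = \<Sum>_{j,k,p,q} sqrt(d_j d_k)/sqrt d_i F^{ajk}_{b;ip} F^{dkj}_{c;iq}
  e^{ap}_{j;cq} \<otimes> e^{pb}_{k;qd}, with j,k admissible with i.\<close>
definition Hcomult :: "('l::finite \<Rightarrow> 'l \<Rightarrow> 'l \<Rightarrow> bool) \<Rightarrow> ('l \<Rightarrow> real)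
    \<Rightarrow> ('l \<Rightarrow> 'l \<Rightarrow> 'l \<Rightarrow> 'l \<Rightarrow> 'l \<Rightarrow> 'l \<Rightarrow> complex)
    \<Rightarrow> ('l hidx \<Rightarrow> complex) \<Rightarrow> ('l hidx \<times> 'l hidx \<Rightarrow> complex)" where
  "Hcomult adm d F x = (\<lambda>((a, p, j, c, q), (p', b, k, q', e)).
      if p' = p \<and> q' = q then
        (\<Sum>i\<in>{i. adm j k i}. x (a, b, i, c, e) * sq (d j * d k) / sq (d i)
            * F a j k b i p * F e k j c i q)
      else 0)"

text \<open>Target counital map \<epsilon>_t(h) = \<epsilon>(\<eta>_(1) h) \<eta>_(2).\<close>
definition eps_t :: "'l::finite \<Rightarrow> ('l \<Rightarrow> 'l \<Rightarrow> 'l \<Rightarrow> bool) \<Rightarrow> ('l \<Rightarrow> real)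
    \<Rightarrow> ('l \<Rightarrow> 'l \<Rightarrow> 'l \<Rightarrow> 'l \<Rightarrow> 'l \<Rightarrow> 'l \<Rightarrow> complex)
    \<Rightarrow> ('l hidx \<Rightarrow> complex) \<Rightarrow> ('l hidx \<Rightarrow> complex)" where
  "eps_t one adm d F h = (\<lambda>t2. \<Sum>t1\<in>UNIV.
      Hcomult adm d F (Hunit adm d) (t1, t2) * Hcounit one (Hmult d (ebasis adm t1) h))"

definition Ht :: "'l::finite \<Rightarrow> ('l \<Rightarrow> 'l \<Rightarrow> 'l \<Rightarrow> bool) \<Rightarrow> ('l \<Rightarrow> real)
    \<Rightarrow> ('l \<Rightarrow> 'l \<Rightarrow> 'l \<Rightarrow> 'l \<Rightarrow> 'l \<Rightarrow> 'l \<Rightarrow> complex) \<Rightarrow> ('l hidx \<Rightarrow> complex) set" where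
  "Ht one adm d F = eps_t one adm d F ` Hspace adm"

definition Ht_act where
  "Ht_act one adm d F h z = eps_t one adm d F (Hmult d h z)"

text \<open>The simple module V_i: coefficient functions on pairs (a,b) with (i,a,b) admissible
  (basis v^{ab}_i), with e^{ab}_{j;cd} \<cdot> v^{pq}_i = \<delta>_{ij} \<delta>_{cp} \<delta>_{dq} / sqrt d_i  v^{ab}_i.\<close>
definition Vspace :: "('l \<Rightarrow> 'l \<Rightarrow> 'l \<Rightarrow> bool) \<Rightarrow> 'l \<Rightarrow> ('l \<times> 'l \<Rightarrow> complex) set" where
  "Vspace adm i = {v. \<forall>a b. \<not> adm a b i \<longrightarrow> v (a, b) = 0}"

definition V_act :: "('l::finite \<Rightarrow> real) \<Rightarrow> 'l \<Rightarrow> ('l hidx \<Rightarrow> complex) \<Rightarrow> ('l \<times> 'l \<Rightarrow> complex)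
    \<Rightarrow> ('l \<times> 'l \<Rightarrow> complex)" where
  "V_act d i h v = (\<lambda>(a, b). (\<Sum>(c, e)\<in>UNIV. h (a, b, i, c, e) * v (c, e)) / sq (d i))"

definition wvec :: "('l::finite \<Rightarrow> 'l \<Rightarrow> 'l \<Rightarrow> bool) \<Rightarrow> ('l \<Rightarrow> real) \<Rightarrow> 'l \<Rightarrow> ('l hidx \<Rightarrow> complex)" where
  "wvec adm d a = (\<lambda>t. \<Sum>(k, b)\<in>{(k, b). adm a k b}. sq (d k) / sq (d a) * ebasis adm (a, b, k, a, b) t)"

end

theory Submission
  imports Defs
begin

text \<open>Pairing h with the first leg of \<Delta>(\<eta>) under the counit only sees the coefficients
  of h on the basis vectors e^{aa}_{1;cc}, and every F-symbol that survives has a unit leg, hence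
  equals 1. So \<epsilon>_t(h) = W(\<mu>) with \<mu>_a = \<Sum>_c h^{aa}_{1;cc} and W(\<mu>) = \<Sum>_a \<mu>_a sqrt(d_a) w_a:
  H_t is the image of the injective linear map W on functions Irr \<Rightarrow> \<complex>. Reading off \<mu>
  identifies H_t with the diagonal module V_1, on which e^{aa}_{1;cc} acts as the matrix unit
  sending \<delta>_c to \<delta>_a; so a nonzero submodule contains every W(\<delta>_a), hence all of H_t.\<close>

locale normalized_fusion_rules =
  fixes one :: "'l::finite"
    and adm :: "'l \<Rightarrow> 'l \<Rightarrow> 'l \<Rightarrow> bool"
    and d :: "'l \<Rightarrow> real"
    and F :: "'l \<Rightarrow> 'l \<Rightarrow> 'l \<Rightarrow> 'l \<Rightarrow> 'l \<Rightarrow> 'l \<Rightarrow> complex"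
  assumes adm_swap12: "adm a b c \<Longrightarrow> adm b a c"
    and adm_swap23: "adm a b c \<Longrightarrow> adm a c b"
    and adm_unit_right [simp]: "adm a one b \<longleftrightarrow> a = b"
    and d_one [simp]: "d one = 1"
    and d_pos: "d a > 0"
    and F_unit: "\<And>a j k b i p. adm a j p \<and> adm p k b \<and> adm j k i \<and> adm a i b \<and>
                   (a = one \<or> j = one \<or> k = one) \<Longrightarrow> F a j k b i p = 1"

lemma normalized_fusion_rules_if_fusion_data:
  assumes "fusion_data one adm d F"
  shows "normalized_fusion_rules one adm d F"
  \<comment> \<open>the explicit binder in \<open>F_unit\<close> fixes the quantifier order, so that every locale
    axiom is literally a conjunct of \<open>fusion_data\<close>\<close>
  using assms unfolding fusion_data_def normalized_fusion_rules_def
  by (elim conjE) (intro conjI; assumption)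

definition unit_rung_sum :: "'l::finite \<Rightarrow> ('l hidx \<Rightarrow> complex) \<Rightarrow> 'l \<Rightarrow> complex" where
  "unit_rung_sum one h a = (\<Sum>c\<in>UNIV. h (a, a, one, c, c))"

text \<open>The map W of the header: target_vec adm d \<mu> = \<Sum>_a \<mu>_a sqrt(d_a) wvec adm d a.\<close>

definition target_vec :: "('l \<Rightarrow> 'l \<Rightarrow> 'l \<Rightarrow> bool) \<Rightarrow> ('l \<Rightarrow> real) \<Rightarrow> ('l \<Rightarrow> complex)
    \<Rightarrow> 'l hidx \<Rightarrow> complex" where
  "target_vec adm d \<mu> =
     (\<lambda>(p, b, k, q, e). if q = p \<and> e = b \<and> adm p k b then sq (d k) * \<mu> p else 0)"

definition diag_vec :: "('l \<Rightarrow> complex) \<Rightarrow> 'l \<times> 'l \<Rightarrow> complex" where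
  "diag_vec \<mu> = (\<lambda>(a, b). if a = b then \<mu> a else 0)"

definition unit_rung_act :: "'l::finite \<Rightarrow> ('l hidx \<Rightarrow> complex) \<Rightarrow> ('l \<Rightarrow> complex) \<Rightarrow> 'l \<Rightarrow> complex" where
  "unit_rung_act one h \<mu> = (\<lambda>a. \<Sum>c\<in>UNIV. h (a, a, one, c, c) * \<mu> c)"

definition delta :: "'l \<Rightarrow> 'l \<Rightarrow> complex" where
  "delta a = (\<lambda>p. if p = a then 1 else 0)"

lemma (in vector_space_pair) dim_eq_if_linear_bij_betw:
  assumes f: "Vector_Spaces.linear s1 s2 f" and S: "vs1.subspace S" and bij: "bij_betw f S T"
  shows "vs2.dim T = vs1.dim S"
proof -
  obtain B where B: "B \<subseteq> S" "vs1.independent B" "S \<subseteq> vs1.span B" "card B = vs1.dim S"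
    by (rule vs1.basis_exists)
  have span_B: "vs1.span B = S"
    using B S by (simp add: vs1.span_subspace)
  have inj: "inj_on f S" and T: "T = f ` S"
    using bij by (auto simp: bij_betw_def)
  have "vs2.span (f ` B) = T"
    using span_B T by (simp add: linear_span_image[OF f])
  moreover have "vs2.independent (f ` B)"
    using B(2) inj span_B by (simp add: linear_independent_injective_image[OF f])
  ultimately have "vs2.dim T = card (f ` B)"
    by (metis vs2.dim_eq_card vs2.span_span)
  also have "\<dots> = vs1.dim S"
    using B inj by (simp add: card_image inj_on_subset)
  finally show ?thesis .
qed

interpretation cvs: vector_space "cscale :: complex \<Rightarrow> ('x \<Rightarrow> complex) \<Rightarrow> ('x \<Rightarrow> complex)"
  by unfold_locales (auto simp: cscale_def algebra_simps)

lemma cvs_pair: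
  "vector_space_pair (cscale :: complex \<Rightarrow> ('x \<Rightarrow> complex) \<Rightarrow> _) (cscale :: complex \<Rightarrow> ('y \<Rightarrow> complex) \<Rightarrow> _)"
  by unfold_locales

lemma linear_cscale_iff:
  "Vector_Spaces.linear cscale cscale f \<longleftrightarrow>
     (\<forall>x y. f (x + y) = f x + f y) \<and> (\<forall>c x. f (cscale c x) = cscale c (f x))"
  by (simp add: Vector_Spaces.linear_iff cvs.vector_space_axioms)

lemma linear_target_vec: "Vector_Spaces.linear cscale cscale (target_vec adm d)"
  by (auto simp: linear_cscale_iff target_vec_def cscale_def fun_eq_iff algebra_simps)

lemma linear_diag_vec: "Vector_Spaces.linear cscale cscale diag_vec"
  by (auto simp: linear_cscale_iff diag_vec_def cscale_def fun_eq_iff)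

lemma linear_unit_rung_sum: "Vector_Spaces.linear cscale cscale (unit_rung_sum one)"
  by (auto simp: linear_cscale_iff unit_rung_sum_def cscale_def fun_eq_iff sum.distrib sum_distrib_left)

lemma inj_diag_vec: "inj diag_vec"
proof (rule injI)
  fix \<mu> \<nu> :: "'l \<Rightarrow> complex"
  assume "diag_vec \<mu> = diag_vec \<nu>"
  then have "diag_vec \<mu> (a, a) = diag_vec \<nu> (a, a)" for a
    by simp
  then show "\<mu> = \<nu>"
    by (simp add: diag_vec_def fun_eq_iff)
qed

lemma Hmult_ebasis_left:
  "Hmult d (ebasis adm (a, p, j, c, q)) h (a', p', i, c', q') =
     (if a' = a \<and> p' = p \<and> j = i \<and> admH adm (a, p, j, c, q)
      then h (c, q, j, c', q') / sq (d j) else 0)"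
proof -
  have "(\<Sum>(x, y)\<in>UNIV. ebasis adm (a, p, j, c, q) (a', p', i, x, y) * h (x, y, i, c', q')) =
      (\<Sum>xy\<in>UNIV. if xy = (c, q) then
         (if a' = a \<and> p' = p \<and> j = i \<and> admH adm (a, p, j, c, q) then h (c, q, j, c', q') else 0)
       else 0)"
    by (rule sum.cong) (auto simp: ebasis_def split: if_splits)
  then show ?thesis
    by (auto simp: Hmult_def)
qed

lemma sum_pairs_graph:
  "(\<Sum>(x, y)\<in>UNIV. if x = g y then f y else 0) = (\<Sum>y\<in>UNIV. f y)"
  for g :: "'c::finite \<Rightarrow> 'a::finite" and f :: "'c \<Rightarrow> 'b::comm_monoid_add"
  unfolding UNIV_Times_UNIV[symmetric] sum.cartesian_product[symmetric] by (subst sum.swap) simp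

lemma sum_fun_apply: "(\<Sum>a\<in>A. f a) x = (\<Sum>a\<in>A. f a x)"
  by (induction A rule: infinite_finite_induct) auto

lemma sum_delta_expansion: "(\<Sum>a\<in>UNIV. cscale (\<mu> a) (delta a)) = (\<mu> :: 'l::finite \<Rightarrow> complex)"
proof
  fix p
  have "(\<Sum>a\<in>UNIV. cscale (\<mu> a) (delta a)) p = (\<Sum>a\<in>UNIV. \<mu> a * delta a p)"
    by (simp add: cscale_def sum_fun_apply)
  then show "(\<Sum>a\<in>UNIV. cscale (\<mu> a) (delta a)) p = \<mu> p"
    by (simp add: delta_def if_distrib cong: if_cong)
qed

lemma span_range_delta: "cvs.span (range (delta :: 'l::finite \<Rightarrow> _)) = UNIV"
proof -
  have "\<mu> \<in> cvs.span (range delta)" for \<mu> :: "'l \<Rightarrow> complex"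
    by (subst sum_delta_expansion[symmetric]) (intro cvs.span_sum cvs.span_scale cvs.span_base; simp)
  then show ?thesis by blast
qed

context normalized_fusion_rules
begin

lemma adm_unit_left [simp]: "adm one a b \<longleftrightarrow> a = b"
  using adm_swap12[of one a b] adm_swap12[of a one b] by auto

lemma adm_unit_last [simp]: "adm a b one \<longleftrightarrow> a = b"
  using adm_swap23[of a b one] adm_swap23[of a one b] by auto

lemma adm_rotate: "adm a k b \<Longrightarrow> adm k b a"
  by (rule adm_swap23, rule adm_swap12)

lemma adm_reverse: "adm a k b \<Longrightarrow> adm b k a"
  by (rule adm_swap23, rule adm_rotate, rule adm_rotate)

lemma d_nonzero [simp]: "d a \<noteq> 0"
  using d_pos[of a] by simp

lemma admH_unit_rung [simp]: "admH adm (a, p, one, c, q) \<longleftrightarrow> p = a \<and> q = c"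
  by (auto simp: admH_def)

lemma counit_mult_ebasis:
  "Hcounit one (Hmult d (ebasis adm (a, p, j, c, q)) h) =
     (if p = a \<and> j = one \<and> q = c then unit_rung_sum one h c else 0)"
proof (cases "p = a \<and> j = one \<and> q = c")
  case True
  then have "Hcounit one (Hmult d (ebasis adm (a, p, j, c, q)) h) =
      (\<Sum>(a', c')\<in>UNIV. if a' = a then h (c, c, one, c', c') else 0)"
    by (auto simp: Hcounit_def Hmult_ebasis_left intro!: sum.cong)
  with True show ?thesis
    using sum_pairs_graph[where g = "\<lambda>_. a"] by (simp add: unit_rung_sum_def)
next
  case False
  then show ?thesis
    by (auto simp: Hcounit_def Hmult_ebasis_left intro!: sum.neutral)
qed

lemma comult_unit_at_unit_rung:
  "Hcomult adm d F (Hunit adm d) ((a, a, one, c, c), (a, b, k, c, e)) =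
     (if c = a \<and> e = b \<and> adm a k b then sq (d k) else 0)"
proof -
  have "Hcomult adm d F (Hunit adm d) ((a, a, one, c, c), (a, b, k, c, e)) =
      Hunit adm d (a, b, k, c, e) * F a one k b k a * F e k one c k c"
  proof -
    have "Collect (adm one k) = {k}"
      by auto
    then show ?thesis
      by (simp add: Hcomult_def)
  qed
  also have "\<dots> = (if c = a \<and> e = b \<and> adm a k b then sq (d k) else 0)"
  proof (cases "c = a \<and> e = b \<and> adm a k b")
    case True
    then have "F a one k b k a = 1" "F e k one c k c = 1"
      by (auto intro: F_unit simp: adm_reverse)
    with True show ?thesis
      by (simp add: Hunit_def admH_def adm_rotate)
  qed (auto simp: Hunit_def admH_def)
  finally show ?thesis .
qed

lemma eps_t_eq_target_vec: "eps_t one adm d F h = target_vec adm d (unit_rung_sum one h)"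
proof
  fix t :: "'l hidx"
  obtain p b k q e where t: "t = (p, b, k, q, e)"
    by (cases t)
  define summand where "summand t' =
    Hcomult adm d F (Hunit adm d) (t', t) * Hcounit one (Hmult d (ebasis adm t') h)" for t'
  have vanish: "summand t' = 0" if "t' \<noteq> (p, p, one, q, q)" for t'
  proof -
    obtain a p' j c q' where t': "t' = (a, p', j, c, q')"
      by (cases t')
    show ?thesis
    proof (cases "p' = a \<and> j = one \<and> q' = c")
      case True
      with that t' have "\<not> (p = p' \<and> q = q')"
        by auto
      then show ?thesis
        by (auto simp: summand_def t t' Hcomult_def)
    qed (auto simp: summand_def t' counit_mult_ebasis)
  qed
  have "eps_t one adm d F h t = (\<Sum>t'\<in>UNIV. if t' = (p, p, one, q, q) then summand t' else 0)"
    unfolding eps_t_def summand_def[symmetric] by (rule sum.cong) (auto simp: vanish)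
  also have "\<dots> = target_vec adm d (unit_rung_sum one h) t"
    by (simp add: summand_def t comult_unit_at_unit_rung counit_mult_ebasis target_vec_def)
  finally show "eps_t one adm d F h t = target_vec adm d (unit_rung_sum one h) t" .
qed

lemma target_vec_in_Hspace: "target_vec adm d \<mu> \<in> Hspace adm"
  by (auto simp: Hspace_def admH_def target_vec_def adm_rotate)

lemma unit_rung_sum_target_vec: "unit_rung_sum one (target_vec adm d \<mu>) = \<mu>"
  by (simp add: unit_rung_sum_def target_vec_def fun_eq_iff)

lemma Ht_eq_range_target_vec: "Ht one adm d F = range (target_vec adm d)"
proof
  show "Ht one adm d F \<subseteq> range (target_vec adm d)"
    by (auto simp: Ht_def eps_t_eq_target_vec)
  have "target_vec adm d \<mu> = eps_t one adm d F (target_vec adm d \<mu>)" for \<mu>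
    by (simp add: eps_t_eq_target_vec unit_rung_sum_target_vec)
  then show "range (target_vec adm d) \<subseteq> Ht one adm d F"
    unfolding Ht_def using target_vec_in_Hspace by blast
qed

lemma target_vec_delta: "target_vec adm d (delta a) = cscale (sq (d a)) (wvec adm d a)"
proof
  fix t :: "'l hidx"
  obtain p b k q e where t: "t = (p, b, k, q, e)"
    by (cases t)
  have "wvec adm d a t = (\<Sum>kb\<in>{(k, b). adm a k b}.
      if kb = (k, b) then (if p = a \<and> q = a \<and> e = b then sq (d k) / sq (d a) else 0) else 0)"
    unfolding wvec_def t
    by (rule sum.cong) (auto simp: ebasis_def admH_def adm_rotate split: if_splits)
  then show "target_vec adm d (delta a) t = cscale (sq (d a)) (wvec adm d a) t"
    by (auto simp: t target_vec_def delta_def cscale_def)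
qed

lemma Ht_eq_span_target_vec_delta:
  "Ht one adm d F = cvs.span (range (\<lambda>a. target_vec adm d (delta a)))"
proof -
  have "cvs.span (target_vec adm d ` range delta) = target_vec adm d ` cvs.span (range delta)"
    by (rule vector_space_pair.linear_span_image[OF cvs_pair linear_target_vec])
  then show ?thesis
    by (simp add: Ht_eq_range_target_vec span_range_delta image_image)
qed

lemma Ht_eq_span_wvec: "Ht one adm d F = cvs.span (range (wvec adm d))"
  unfolding Ht_eq_span_target_vec_delta
proof (rule cvs.span_eq[THEN iffD2], intro conjI subsetI)
  fix z assume "z \<in> range (\<lambda>a. target_vec adm d (delta a))"
  then show "z \<in> cvs.span (range (wvec adm d))"
    by (auto simp: target_vec_delta intro: cvs.span_scale cvs.span_base)
next
  fix z assume "z \<in> range (wvec adm d)"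
  then obtain a where "z = wvec adm d a"
    by blast
  then have "z = cscale (1 / sq (d a)) (target_vec adm d (delta a))"
    by (simp add: target_vec_delta cscale_def)
  then show "z \<in> cvs.span (range (\<lambda>a. target_vec adm d (delta a)))"
    by (auto intro: cvs.span_scale cvs.span_base)
qed

lemma Ht_act_target_vec:
  "Ht_act one adm d F h (target_vec adm d \<mu>) = target_vec adm d (unit_rung_act one h \<mu>)"
proof -
  have mult: "Hmult d h (target_vec adm d \<mu>) (a, a, one, c, c) = h (a, a, one, c, c) * \<mu> c" for a c
  proof -
    have "(\<Sum>(x, y)\<in>UNIV. h (a, a, one, x, y) * target_vec adm d \<mu> (x, y, one, c, c))
        = (\<Sum>xy\<in>UNIV. if xy = (c, c) then h (a, a, one, c, c) * \<mu> c else 0)"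
      by (rule sum.cong) (auto simp: target_vec_def split: if_splits)
    then show ?thesis
      by (simp add: Hmult_def)
  qed
  then have "unit_rung_sum one (Hmult d h (target_vec adm d \<mu>)) = unit_rung_act one h \<mu>"
    by (simp add: fun_eq_iff unit_rung_sum_def unit_rung_act_def)
  then show ?thesis
    by (simp add: Ht_act_def eps_t_eq_target_vec)
qed

lemma V_act_diag_vec:
  assumes "h \<in> Hspace adm"
  shows "V_act d one h (diag_vec \<mu>) = diag_vec (unit_rung_act one h \<mu>)"
proof
  fix t :: "'l \<times> 'l"
  obtain a b where t: "t = (a, b)"
    by (cases t)
  have off_diag: "h (a, b, one, c, c) = 0" if "a \<noteq> b" for c
    using assms that by (simp add: Hspace_def admH_def)
  have "(\<Sum>(c, e)\<in>UNIV. h (a, b, one, c, e) * diag_vec \<mu> (c, e)) =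
      (\<Sum>(c, e)\<in>UNIV. if c = e then h (a, b, one, e, e) * \<mu> e else 0)"
    by (rule sum.cong) (auto simp: diag_vec_def)
  also have "\<dots> = (\<Sum>c\<in>UNIV. h (a, b, one, c, c) * \<mu> c)"
    by (rule sum_pairs_graph[where g = id, simplified])
  finally show "V_act d one h (diag_vec \<mu>) t = diag_vec (unit_rung_act one h \<mu>) t"
    by (simp add: t V_act_def diag_vec_def unit_rung_act_def off_diag)
qed

lemma Vspace_unit_eq_range_diag_vec: "Vspace adm one = range diag_vec"
proof
  show "range diag_vec \<subseteq> Vspace adm one"
    by (auto simp: Vspace_def diag_vec_def)
  have "v = diag_vec (\<lambda>a. v (a, a))" if "v \<in> Vspace adm one" for v
    using that by (auto simp: Vspace_def diag_vec_def fun_eq_iff)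
  then show "Vspace adm one \<subseteq> range diag_vec"
    by blast
qed

lemma unit_rung_act_ebasis:
  "unit_rung_act one (ebasis adm (a, a, one, c, c)) \<mu> = cscale (\<mu> c) (delta a)"
proof
  fix p
  have "(\<Sum>c'\<in>UNIV. ebasis adm (a, a, one, c, c) (p, p, one, c', c') * \<mu> c')
      = (\<Sum>c'\<in>UNIV. if c' = c then \<mu> c * delta a p else 0)"
    by (rule sum.cong) (auto simp: ebasis_def delta_def)
  then show "unit_rung_act one (ebasis adm (a, a, one, c, c)) \<mu> p = cscale (\<mu> c) (delta a) p"
    by (simp add: unit_rung_act_def cscale_def)
qed

lemma Ht_submodule_trivial:
  assumes W: "cvs.subspace W" "W \<subseteq> Ht one adm d F"
    and invariant: "\<forall>h\<in>Hspace adm. \<forall>z\<in>W. Ht_act one adm d F h z \<in> W"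
  shows "W = {\<lambda>_. 0} \<or> W = Ht one adm d F"
proof (cases "W \<subseteq> {0}")
  case True
  then show ?thesis
    using cvs.subspace_0[OF W(1)] by (auto simp: zero_fun_def)
next
  case False
  then obtain \<mu> where z: "target_vec adm d \<mu> \<in> W" "target_vec adm d \<mu> \<noteq> 0"
    using W(2) by (auto simp: Ht_eq_range_target_vec)
  then have "\<mu> \<noteq> (\<lambda>_. 0)"
    by (auto simp: target_vec_def zero_fun_def)
  then obtain c where c: "\<mu> c \<noteq> 0"
    by auto
  have "target_vec adm d (delta a) \<in> W" for a
  proof -
    have "ebasis adm (a, a, one, c, c) \<in> Hspace adm"
      by (simp add: Hspace_def ebasis_def)
    then have "Ht_act one adm d F (ebasis adm (a, a, one, c, c)) (target_vec adm d \<mu>) \<in> W"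
      using invariant z(1) by blast
    then have "cscale (\<mu> c) (target_vec adm d (delta a)) \<in> W"
      by (simp add: Ht_act_target_vec unit_rung_act_ebasis
          vector_space_pair.linear_scale[OF cvs_pair linear_target_vec])
    then have "cscale (1 / \<mu> c) (cscale (\<mu> c) (target_vec adm d (delta a))) \<in> W"
      by (rule cvs.subspace_scale[OF W(1)])
    with c show ?thesis
      by (simp add: cscale_def)
  qed
  then have "range (\<lambda>a. target_vec adm d (delta a)) \<subseteq> W"
    by blast
  then have "Ht one adm d F \<subseteq> W"
    unfolding Ht_eq_span_target_vec_delta by (rule cvs.span_minimal[OF _ W(1)])
  with W(2) show ?thesis
    by blast
qed


lemma bij_betw_Ht_Vspace_unit:
  "bij_betw (diag_vec \<circ> unit_rung_sum one) (Ht one adm d F) (Vspace adm one)"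
  using inj_diag_vec
  by (auto simp: bij_betw_def inj_on_def inj_def Ht_eq_range_target_vec
      Vspace_unit_eq_range_diag_vec unit_rung_sum_target_vec image_image)

lemma Ht_act_intertwines_V_act:
  assumes "h \<in> Hspace adm" "z \<in> Ht one adm d F"
  shows "(diag_vec \<circ> unit_rung_sum one) (Ht_act one adm d F h z) =
    V_act d one h ((diag_vec \<circ> unit_rung_sum one) z)"
  using assms
  by (auto simp: Ht_eq_range_target_vec Ht_act_target_vec unit_rung_sum_target_vec V_act_diag_vec)

lemma Ht_nontrivial: "Ht one adm d F \<noteq> {\<lambda>_. 0}"
proof -
  have "target_vec adm d (\<lambda>_. 1) (one, one, one, one, one) \<noteq> 0"
    by (simp add: target_vec_def)
  then show ?thesis
    unfolding Ht_eq_range_target_vec by (metis rangeI singletonD)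
qed

end

theorem mainTheorem10:
  fixes one :: "'l::finite"
    and adm :: "'l \<Rightarrow> 'l \<Rightarrow> 'l \<Rightarrow> bool"
    and d :: "'l \<Rightarrow> real"
    and F :: "'l \<Rightarrow> 'l \<Rightarrow> 'l \<Rightarrow> 'l \<Rightarrow> 'l \<Rightarrow> 'l \<Rightarrow> complex"
  assumes "fusion_data one adm d F"
  shows "Ht one adm d F = module.span cscale (range (wvec adm d)) \<and>
         vector_space.dim cscale (Ht one adm d F) = vector_space.dim cscale (Vspace adm one) \<and>
         (\<exists>\<phi>. Vector_Spaces.linear cscale cscale \<phi> \<and> bij_betw \<phi> (Ht one adm d F) (Vspace adm one) \<and>
           (\<forall>h\<in>Hspace adm. \<forall>z\<in>Ht one adm d F.
              \<phi> (Ht_act one adm d F h z) = V_act d one h (\<phi> z))) \<and>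
         Ht one adm d F \<noteq> {\<lambda>_. 0} \<and>
         (\<forall>W. module.subspace cscale W \<and> W \<subseteq> Ht one adm d F \<and>
              (\<forall>h\<in>Hspace adm. \<forall>z\<in>W. Ht_act one adm d F h z \<in> W)
           \<longrightarrow> W = {\<lambda>_. 0} \<or> W = Ht one adm d F)"
proof -
  interpret normalized_fusion_rules one adm d F
    using assms by (rule normalized_fusion_rules_if_fusion_data)
  have linear: "Vector_Spaces.linear cscale cscale (diag_vec \<circ> unit_rung_sum one)"
    using linear_unit_rung_sum linear_diag_vec by (rule Vector_Spaces.linear_compose)
  have "vector_space.dim cscale (Vspace adm one) = vector_space.dim cscale (Ht one adm d F)"
    using linear _ bij_betw_Ht_Vspace_unit
    by (rule vector_space_pair.dim_eq_if_linear_bij_betw[OF cvs_pair])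
      (simp add: Ht_eq_span_wvec)
  then show ?thesis
    using Ht_eq_span_wvec linear bij_betw_Ht_Vspace_unit Ht_act_intertwines_V_act
      Ht_nontrivial Ht_submodule_trivial
    by auto
qed

end
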